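(* Let $m\ge1$, $N=2^m$, let $\mathcal{A}\subseteq[0,N-1]$ be nonempty such that the monomial set $\mathcal{I}=\{\mathbf{x}^{\mathrm{bin}(N-1-i)}:i\in\mathcal{A}\}$ is decreasing, and suppose the code $\mathcal{C}_{\boldsymbol{G}_N}(\mathcal{A})$ has minimum distance $2^{m-r}$. Let $\mathbf{P}\in\mathbb{F}_2^{N\times N}$ be upper triangular with unit diagonal. Then the minimum distance of $\mathcal{C}_{\mathbf{P}\boldsymbol{G}_N}(\mathcal{A})$ is also $2^{m-r}$, and the number of codewords of $\mathcal{C}_{\mathbf{P}\boldsymbol{G}_N}(\mathcal{A})$ of Hamming weight $2^{m-r}$ is at least $2^r$.
   Context: $\boldsymbol{G}_N=\begin{pmatrix}1&0\\1&1\end{pmatrix}^{\otimes m}$ over $\mathbb{F}_2$, rows/columns indexed by $0,\dots,N-1$; $\mathcal{C}_{\mathbf{B}}(\mathcal{S})$ is the code spanned by the rows of $\mathbf{B}$ indexed by $\mathcal{S}$. For $i\in[0,N-1]$, $\mathrm{bin}(i)=(i_0,\dots,i_{m-1})$ with $i=\sum_j i_j2^j$, $\mathbf{x}^{b}=\prod_jx_j^{b_j}$; row $i$ of $\boldsymbol{G}_N$ is the evaluation vector of $\mathbf{x}^{\mathrm{bin}(N-1-i)}$ on $\mathbb{F}_2^m$. Order on monomials: $f\preceq_w g$ iff $f\mid g$; for $f=x_{i_1}\cdots x_{i_s}$, $g=x_{j_1}\cdots x_{j_s}$ with $i_1<\dots<i_s$, $j_1<\dots<j_s$, $f\preceq_{sh}g$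 iff $i_\ell\le j_\ell$ for all $\ell$; $f\preceq g$ iff some monomial $g^*$ satisfies $f\preceq_{sh}g^*\preceq_w g$. A set $\mathcal{I}$ of monomials is decreasing if $f\in\mathcal{I}$, $g\preceq f$ imply $g\in\mathcal{I}$. *)

theory Defs
  imports Main "HOL-Library.Z2"
begin

text \<open>G_N = (1 0; 1 1) Kronecker-power m, with (A (x) B) i j = A (i div n) (j div n) * B (i mod n) (j mod n).\<close>
definition kernel2 :: "nat \<Rightarrow> nat \<Rightarrow> bit" where
  "kernel2 i j = (if i = 0 \<and> j = 1 then 0 else 1)"

fun polarG :: "nat \<Rightarrow> nat \<Rightarrow> nat \<Rightarrow> bit" where
  "polarG 0 i j = 1"
| "polarG (Suc m) i j =
     kernel2 (i div 2 ^ m) (j div 2 ^ m) * polarG m (i mod 2 ^ m) (j mod 2 ^ m)"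

definition matmul :: "nat \<Rightarrow> (nat \<Rightarrow> nat \<Rightarrow> bit) \<Rightarrow> (nat \<Rightarrow> nat \<Rightarrow> bit) \<Rightarrow> nat \<Rightarrow> nat \<Rightarrow> bit" where
  "matmul N P Q i j = (\<Sum>k<N. P i k * Q k j)"

definition row_code :: "nat \<Rightarrow> (nat \<Rightarrow> nat \<Rightarrow> bit) \<Rightarrow> nat set \<Rightarrow> (nat \<Rightarrow> bit) set" where
  "row_code N B S = {c. \<exists>a::nat \<Rightarrow> bit. c = (\<lambda>j. if j < N then (\<Sum>i\<in>S. a i * B i j) else 0)}"

definition hweight :: "nat \<Rightarrow> (nat \<Rightarrow> bit) \<Rightarrow> nat" where
  "hweight N c = card {j. j < N \<and> c j \<noteq> 0}"

definition min_distance :: "nat \<Rightarrow> (nat \<Rightarrow> bit) set \<Rightarrow> nat" where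
  "min_distance N C = Min {hweight N c | c. c \<in> C \<and> c \<noteq> (\<lambda>_. 0)}"

text \<open>Monomials x^b with b in F_2^m are represented by their support {j. b_j = 1}.\<close>
definition mono_of_bin :: "nat \<Rightarrow> nat set" where
  "mono_of_bin k = {j. bit k j}"

definition mono_of_index :: "nat \<Rightarrow> nat \<Rightarrow> nat set" where
  "mono_of_index m i = mono_of_bin (2 ^ m - 1 - i)"

definition shift_le :: "nat set \<Rightarrow> nat set \<Rightarrow> bool" where
  "shift_le f g \<longleftrightarrow> finite f \<and> finite g \<and> card f = card g \<and>
     (\<forall>l < card f. sorted_list_of_set f ! l \<le> sorted_list_of_set g ! l)"

definition mono_le :: "nat set \<Rightarrow> nat set \<Rightarrow> bool" where
  "mono_le f g \<longleftrightarrow> (\<exists>g'. shift_le f g' \<and> g' \<subseteq> g)"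

definition decreasing :: "nat set set \<Rightarrow> bool" where
  "decreasing I \<longleftrightarrow> (\<forall>f \<in> I. \<forall>g. mono_le g f \<longrightarrow> g \<in> I)"

end

theory Submission
  imports Defs
begin

text \<open>Row i of G_N is the indicator of the submasks of i, of weight 2^wt(i). If a codeword
  b G_N has leading coefficient at i, then it sums to 1 over every fibre {j. j AND i = z} with z a
  submask of i, since each later row meets such a fibre in an even number of positions; so its
  weight is at least 2^wt(i). As P is unit upper triangular, every codeword of the code of P G_N
  has this form with leading index in A, hence weight at least the minimum distance
  min {2^wt(i) | i in A} of the code of G_N. A row of A of minimal weight 2^(m-r) has at least r
  zero bits, i.e. its monomial has degree at least r, so the decreasing set A contains every index
  whose monomial involves only x_0, ..., x_(r-1): these are the last 2^r indices. Their rows lie in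
  the code of P G_N by back substitution, and by Moebius inversion over submasks so do the 2^r
  indicators of the sets {j. j mod 2^r = t}, each of weight 2^(m-r).\<close>

text \<open>The default simp rules of Z2 turn sums and products of bits into boolean xor and and;
  the arguments below are field arithmetic over F_2.\<close>
declare add_bit_eq_xor [simp del] mult_bit_eq_and [simp del]

instance bit :: finite
  by standard (rule finite_subset[of _ "{0, 1}"], auto intro: bit.exhaust)

lemma less_power2_iff_bits: "(x::nat) < 2 ^ m \<longleftrightarrow> (\<forall>n. bit x n \<longrightarrow> n < m)"
  by (auto simp flip: take_bit_nat_eq_self_iff simp: bit_eq_iff bit_take_bit_iff)

definition submask :: "nat \<Rightarrow> nat \<Rightarrow> bool" where
  "submask j i \<longleftrightarrow> (\<forall>l. bit j l \<longrightarrow> bit i l)"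

lemma submask_refl [simp]: "submask i i"
  by (simp add: submask_def)

lemma submask_iff_and_eq: "submask j i \<longleftrightarrow> and j i = j"
  by (auto simp: submask_def bit_eq_iff bit_and_iff)

lemma submask_imp_le: "submask j i \<Longrightarrow> j \<le> i"
proof -
  assume ji: "submask j i"
  have "j + xor i j = or j (xor i j)"
    by (rule disjunctive_add) (use ji in \<open>auto simp: bit_xor_iff submask_def\<close>)
  also have "\<dots> = i"
    using ji by (auto simp: bit_eq_iff bit_or_iff bit_xor_iff submask_def)
  finally show ?thesis by linarith
qed

lemma div_power2_eq_of_bool_bit:
  assumes "(i::nat) < 2 ^ Suc m"
  shows "i div 2 ^ m = of_bool (bit i m)"
proof -
  have "i div 2 ^ m < 2"
    using assms by (simp add: less_mult_imp_div_less mult.commute)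
  then have "i div 2 ^ m = 0 \<or> i div 2 ^ m = 1" by linarith
  then show ?thesis by (auto simp: bit_iff_odd)
qed

lemma polarG_eq_submask:
  "i < 2 ^ m \<Longrightarrow> j < 2 ^ m \<Longrightarrow> polarG m i j = of_bool (submask j i)"
proof (induction m arbitrary: i j)
  case 0
  then show ?case by (simp add: submask_def)
next
  case (Suc m)
  have "polarG m (i mod 2 ^ m) (j mod 2 ^ m) = of_bool (\<forall>l<m. bit j l \<longrightarrow> bit i l)"
    by (simp add: Suc.IH submask_def bit_take_bit_iff flip: take_bit_eq_mod)
  moreover have "submask j i \<longleftrightarrow> (\<forall>l<m. bit j l \<longrightarrow> bit i l) \<and> (bit j m \<longrightarrow> bit i m)"
    using Suc.prems(2)[unfolded less_power2_iff_bits] by (auto simp: submask_def less_Suc_eq)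
  ultimately show ?case
    using Suc.prems by (auto simp: kernel2_def div_power2_eq_of_bool_bit)
qed

lemma ex_nat_bits_eq: "finite L \<Longrightarrow> \<exists>x::nat. \<forall>l. bit x l \<longleftrightarrow> l \<in> L"
proof (induction L rule: finite_induct)
  case empty
  show ?case by (rule exI[of _ 0]) simp
next
  case (insert l L)
  then obtain x :: nat where "\<forall>l. bit x l \<longleftrightarrow> l \<in> L" by blast
  then show ?case by (intro exI[of _ "set_bit l x"]) (auto simp: bit_set_bit_iff)
qed

lemma card_submasks:
  assumes "i < 2 ^ m"
  shows "card {j. j < 2 ^ m \<and> submask j i} = 2 ^ card {l. l < m \<and> bit i l}"
proof -
  have "bij_betw (\<lambda>j. {l. bit j l}) {j. j < 2 ^ m \<and> submask j i} (Pow {l. l < m \<and> bit i l})"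
  proof (rule bij_betw_imageI)
    show "inj_on (\<lambda>j. {l. bit j l}) {j. j < 2 ^ m \<and> submask j i}"
      by (rule inj_onI) (simp add: bit_eq_iff set_eq_iff)
    show "(\<lambda>j. {l. bit j l}) ` {j. j < 2 ^ m \<and> submask j i} = Pow {l. l < m \<and> bit i l}"
    proof (intro equalityI subsetI)
      fix L assume L: "L \<in> Pow {l. l < m \<and> bit i l}"
      have "finite L" using L by (auto intro: finite_subset[of _ "{..<m}"])
      then obtain x :: nat where x: "\<forall>l. bit x l \<longleftrightarrow> l \<in> L" using ex_nat_bits_eq by blast
      then have "x < 2 ^ m" "submask x i" "L = {l. bit x l}"
        using L by (auto simp: less_power2_iff_bits submask_def)
      then show "L \<in> (\<lambda>j. {l. bit j l}) ` {j. j < 2 ^ m \<and> submask j i}" by blast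
    qed (use assms in \<open>auto simp: submask_def less_power2_iff_bits\<close>)
  qed
  then show ?thesis by (simp add: bij_betw_same_card card_Pow)
qed

lemma card_zero_bits: "card {l. l < m \<and> \<not> bit (i::nat) l} = m - card {l. l < m \<and> bit i l}"
proof -
  have "card {l. l < m \<and> \<not> bit i l} = card ({..<m} - {l. l < m \<and> bit i l})"
    by (rule arg_cong[where f = card]) auto
  also have "\<dots> = m - card {l. l < m \<and> bit i l}"
    by (subst card_Diff_subset) auto
  finally show ?thesis .
qed

lemma even_card_submasks_in_fibre:
  assumes "k < 2 ^ m" "i < k"
  shows "even (card {j. j < 2 ^ m \<and> and j i = z \<and> submask j k})"
proof -
  obtain l where kl: "bit k l" and il: "\<not> bit i l"
    using assms(2) submask_imp_le unfolding submask_def by (meson leD)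
  have "l < m" using kl assms(1) less_power2_iff_bits by blast
  define Y where "Y = {j. j < 2 ^ m \<and> and j i = z \<and> submask j k}"
  have flip_in_Y: "flip_bit l j \<in> Y" if "j \<in> Y" for j
  proof -
    have "flip_bit l j < 2 ^ m"
      using that \<open>l < m\<close> by (auto simp: Y_def less_power2_iff_bits bit_flip_bit_iff)
    moreover have "and (flip_bit l j) i = and j i"
      using il by (intro bit_eqI) (auto simp: bit_and_iff bit_flip_bit_iff)
    moreover have "submask (flip_bit l j) k"
      using that kl by (auto simp: Y_def submask_def bit_flip_bit_iff)
    ultimately show ?thesis using that by (simp add: Y_def)
  qed
  have flip_flip: "flip_bit l (flip_bit l j) = j" for j :: nat
    by (rule bit_eqI) (auto simp: bit_flip_bit_iff)
  have "bij_betw (flip_bit l) {j\<in>Y. \<not> bit j l} {j\<in>Y. bit j l}"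
    by (rule bij_betw_byWitness[where f' = "flip_bit l"])
      (auto simp: flip_flip flip_in_Y bit_flip_bit_iff)
  then have "card {j\<in>Y. \<not> bit j l} = card {j\<in>Y. bit j l}" by (rule bij_betw_same_card)
  moreover have "card Y = card {j\<in>Y. \<not> bit j l} + card {j\<in>Y. bit j l}"
    by (subst card_Un_disjoint[symmetric]) (auto simp: Y_def intro: arg_cong[where f = card])
  ultimately show ?thesis by (simp add: Y_def)
qed

lemma sum_fibre_polarG_combination:
  fixes b :: "nat \<Rightarrow> bit"
  assumes "i < 2 ^ m" "b i = 1" "\<forall>k<i. b k = 0" "submask z i"
  shows "(\<Sum>j | j < 2 ^ m \<and> and j i = z. \<Sum>k<2 ^ m. b k * polarG m k j) = 1"
proof -
  define X where "X = {j. j < 2 ^ m \<and> and j i = z}"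
  have "b k * (\<Sum>j\<in>X. polarG m k j) = of_bool (k = i)" if "k < 2 ^ m" for k
  proof -
    have "(\<Sum>j\<in>X. polarG m k j) = (\<Sum>j\<in>X. of_bool (submask j k))"
      using that by (intro sum.cong) (auto simp: X_def polarG_eq_submask)
    also have "\<dots> = of_nat (card {j\<in>X. submask j k})"
      by (simp add: X_def Int_def)
    finally have sum_eq_card: "(\<Sum>j\<in>X. polarG m k j) = of_nat (card {j\<in>X. submask j k})" .
    show ?thesis
    proof (cases k i rule: linorder_cases)
      case less
      then show ?thesis using assms(3) by simp
    next
      case equal
      have "z \<le> i" using assms(4) by (rule submask_imp_le)
      then have "{j\<in>X. submask j i} = {z}"
        using assms(1,4) by (auto simp: X_def submask_iff_and_eq)
      then show ?thesis using equal sum_eq_card assms(2) by simp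
    next
      case greater
      then have "even (card {j\<in>X. submask j k})"
        using even_card_submasks_in_fibre[OF that greater] by (simp add: X_def)
      then show ?thesis using greater sum_eq_card by (auto elim: evenE)
    qed
  qed
  then have "(\<Sum>k<2 ^ m. b k * (\<Sum>j\<in>X. polarG m k j)) = (\<Sum>k<2 ^ m. of_bool (k = i))"
    by (intro sum.cong) auto
  then have "(\<Sum>j\<in>X. \<Sum>k<2 ^ m. b k * polarG m k j) = (\<Sum>k<2 ^ m. of_bool (k = i))"
    by (simp add: sum_distrib_left sum.swap[of _ X])
  also have "\<dots> = 1" using assms(1) by simp
  finally show ?thesis by (simp add: X_def)
qed

lemma card_submasks_le_hweight:
  fixes b :: "nat \<Rightarrow> bit"
  assumes "i < 2 ^ m" "b i = 1" "\<forall>k<i. b k = 0"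
  shows "card {j. j < 2 ^ m \<and> submask j i}
    \<le> hweight (2 ^ m) (\<lambda>j. if j < 2 ^ m then \<Sum>k<2 ^ m. b k * polarG m k j else 0)"
    (is "_ \<le> hweight _ ?c")
proof -
  define W where "W = {j. j < 2 ^ m \<and> ?c j \<noteq> 0}"
  have "{j. j < 2 ^ m \<and> submask j i} \<subseteq> (\<lambda>j. and j i) ` W"
  proof
    fix z assume z: "z \<in> {j. j < 2 ^ m \<and> submask j i}"
    have "(\<Sum>j | j < 2 ^ m \<and> and j i = z. ?c j)
        = (\<Sum>j | j < 2 ^ m \<and> and j i = z. \<Sum>k<2 ^ m. b k * polarG m k j)"
      by (rule sum.cong) auto
    also have "\<dots> = 1"
      using z sum_fibre_polarG_combination[OF assms] by simp
    finally have "(\<Sum>j | j < 2 ^ m \<and> and j i = z. ?c j) \<noteq> 0" by simp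
    then obtain j where "j \<in> {j. j < 2 ^ m \<and> and j i = z}" "?c j \<noteq> 0"
      by (rule sum.not_neutral_contains_not_neutral)
    then show "z \<in> (\<lambda>j. and j i) ` W" by (auto simp: W_def)
  qed
  then have "card {j. j < 2 ^ m \<and> submask j i} \<le> card ((\<lambda>j. and j i) ` W)"
    by (rule card_mono[rotated]) (simp add: W_def)
  also have "\<dots> \<le> card W" by (rule card_image_le) (simp add: W_def)
  finally show ?thesis unfolding hweight_def W_def .
qed

lemma zero_in_row_code: "(\<lambda>_. 0) \<in> row_code N B S"
  unfolding row_code_def by (auto intro!: exI[of _ "\<lambda>_. 0"])

lemma row_code_add:
  assumes "c \<in> row_code N B S" "c' \<in> row_code N B S"
  shows "(\<lambda>j. c j + c' j) \<in> row_code N B S"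
proof -
  obtain a a' where "c = (\<lambda>j. if j < N then \<Sum>i\<in>S. a i * B i j else 0)"
    and "c' = (\<lambda>j. if j < N then \<Sum>i\<in>S. a' i * B i j else 0)"
    using assms unfolding row_code_def by blast
  then show ?thesis
    unfolding row_code_def by (auto intro!: exI[of _ "\<lambda>i. a i + a' i"] simp: distrib_right sum.distrib)
qed

lemma row_code_sum:
  "finite F \<Longrightarrow> (\<And>x. x \<in> F \<Longrightarrow> f x \<in> row_code N B S) \<Longrightarrow> (\<lambda>j. \<Sum>x\<in>F. f x j) \<in> row_code N B S"
  by (induction F rule: finite_induct) (simp_all add: zero_in_row_code row_code_add)

lemma row_in_row_code:
  assumes "finite S" "i \<in> S"
  shows "(\<lambda>j. if j < N then B i j else 0) \<in> row_code N B S"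
proof -
  have "(\<Sum>k\<in>S. of_bool (k = i) * B k j) = (\<Sum>k\<in>S. if k = i then B k j else 0)" for j
    by (rule sum.cong) auto
  then have "(\<Sum>k\<in>S. of_bool (k = i) * B k j) = B i j" for j
    using assms by simp
  then show ?thesis
    unfolding row_code_def by (auto intro!: exI[of _ "\<lambda>k. of_bool (k = i)"])
qed

lemma finite_row_code: "finite (row_code N B S)"
proof (rule finite_subset)
  show "row_code N B S \<subseteq> {c. \<forall>j. j \<notin> {..<N} \<longrightarrow> c j = 0}"
    unfolding row_code_def by auto
  show "finite {c :: nat \<Rightarrow> bit. \<forall>j. j \<notin> {..<N} \<longrightarrow> c j = 0}"
    using finite_set_of_finite_funs[of "{..<N}" "UNIV :: bit set" 0] by simp
qed

lemma hweight_le: "hweight N c \<le> N"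
  unfolding hweight_def by (rule card_mono[of "{..<N}", simplified]) auto

lemma finite_hweights: "finite {hweight N c |c. c \<in> C \<and> c \<noteq> (\<lambda>_. 0)}"
  by (rule finite_subset[of _ "{..N}"]) (auto simp: hweight_le)

lemma min_distance_eqI:
  assumes "\<And>c. c \<in> C \<Longrightarrow> c \<noteq> (\<lambda>_. 0) \<Longrightarrow> d \<le> hweight N c"
    and "c \<in> C" "c \<noteq> (\<lambda>_. 0)" "hweight N c = d"
  shows "min_distance N C = d"
  unfolding min_distance_def using assms finite_hweights by (intro Min_eqI) auto

definition unit_upper_triangular :: "nat \<Rightarrow> (nat \<Rightarrow> nat \<Rightarrow> bit) \<Rightarrow> bool" where
  "unit_upper_triangular N P \<longleftrightarrow> (\<forall>i<N. P i i = 1) \<and> (\<forall>i<N. \<forall>j<i. P i j = 0)"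

lemma unit_upper_triangular_id: "unit_upper_triangular N (\<lambda>i k. of_bool (i = k))"
  by (simp add: unit_upper_triangular_def)

lemma row_code_matmul_id:
  assumes "S \<subseteq> {0..<N}"
  shows "row_code N (matmul N (\<lambda>i k. of_bool (i = k)) B) S = row_code N B S"
proof -
  have row_eq: "matmul N (\<lambda>i k. of_bool (i = k)) B i j = B i j" if "i \<in> S" for i j
  proof -
    have "matmul N (\<lambda>i k. of_bool (i = k)) B i j = (\<Sum>k<N. if i = k then B k j else 0)"
      unfolding matmul_def by (rule sum.cong) auto
    then show ?thesis using that assms by auto
  qed
  have "(\<Sum>i\<in>S. a i * matmul N (\<lambda>i k. of_bool (i = k)) B i j) = (\<Sum>i\<in>S. a i * B i j)"
    for a j by (rule sum.cong) (simp_all add: row_eq)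
  then show ?thesis
    unfolding row_code_def by (simp only:)
qed

lemma row_code_matmul_leading_row:
  assumes P: "unit_upper_triangular N P" and S: "S \<subseteq> {0..<N}"
    and c: "c \<in> row_code N (matmul N P B) S" "c \<noteq> (\<lambda>_. 0)"
  obtains i b where "i \<in> S" "b i = 1" "\<forall>k<i. b k = 0"
    "c = (\<lambda>j. if j < N then \<Sum>k<N. b k * B k j else 0)"
proof -
  obtain a where ca: "c = (\<lambda>j. if j < N then \<Sum>i\<in>S. a i * matmul N P B i j else 0)"
    using c(1) unfolding row_code_def by blast
  have fin: "finite S" using S finite_subset by blast
  define support where "support = {i\<in>S. a i \<noteq> 0}"
  have "support \<noteq> {}"
  proof
    assume "support = {}"
    then have "c = (\<lambda>_. 0)" by (auto simp: ca support_def fun_eq_iff intro: sum.neutral)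
    with c(2) show False ..
  qed
  moreover have "finite support" using fin by (simp add: support_def)
  ultimately have i0: "Min support \<in> S" "a (Min support) = 1"
    and i0_le: "\<And>i. i \<in> S \<Longrightarrow> a i \<noteq> 0 \<Longrightarrow> Min support \<le> i"
    using Min_in by (auto simp: support_def)
  define b where "b k = (\<Sum>i\<in>S. a i * P i k)" for k
  have coeff: "a i * P i k = of_bool (i = Min support \<and> k = Min support)"
    if i: "i \<in> S" and k: "k \<le> Min support" for i k
  proof (cases "a i = 0")
    case False
    then have "Min support \<le> i" "i < N" using i0_le i S by auto
    then consider "k < i" | "k = i" "i = Min support" using k by linarith
    then show ?thesis
      using False P \<open>i < N\<close> by cases (auto simp: unit_upper_triangular_def)
  qed (use i0 in auto)
  have b_low: "b k = of_bool (k = Min support)" if "k \<le> Min support" for k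
    using that i0(1) fin by (simp add: b_def coeff)
  have combination: "(\<Sum>i\<in>S. a i * matmul N P B i j) = (\<Sum>k<N. b k * B k j)" for j
    by (simp add: matmul_def b_def sum_distrib_left sum_distrib_right mult.assoc sum.swap[of _ S])
  have "c = (\<lambda>j. if j < N then \<Sum>k<N. b k * B k j else 0)"
    unfolding ca combination ..
  moreover have "b (Min support) = 1" "\<forall>k<Min support. b k = 0" by (simp_all add: b_low)
  ultimately show ?thesis using that i0(1) by blast
qed

lemma matmul_unit_upper_triangular_row:
  assumes P: "unit_upper_triangular N P" and k: "k < N"
  shows "matmul N P B k j = B k j + (\<Sum>k' | k < k' \<and> k' < N \<and> P k k' = 1. B k' j)"
proof -
  define F where "F = {k'. k < k' \<and> k' < N \<and> P k k' = 1}"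
  have "matmul N P B k j = (\<Sum>k'\<in>insert k F. B k' j)"
    unfolding matmul_def
  proof (rule sum.mono_neutral_cong_right)
    show "\<forall>k'\<in>{..<N} - insert k F. P k k' * B k' j = 0"
    proof
      fix k' assume "k' \<in> {..<N} - insert k F"
      then have "P k k' = 0"
        using P k by (cases "k' < k") (auto simp: F_def unit_upper_triangular_def)
      then show "P k k' * B k' j = 0" by simp
    qed
    show "P k k' * B k' j = B k' j" if "k' \<in> insert k F" for k'
      using that P k by (auto simp: F_def unit_upper_triangular_def)
  qed (use k in \<open>auto simp: F_def\<close>)
  also have "\<dots> = B k j + (\<Sum>k'\<in>F. B k' j)"
    by (simp add: F_def)
  finally show ?thesis unfolding F_def .
qed

lemma bit_eq_add_swap: "(x::bit) = y + z \<Longrightarrow> y = x + z"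
  by (cases x; cases y; cases z) simp_all

lemma row_code_matmul_contains_tail_rows:
  assumes P: "unit_upper_triangular N P" and S: "S \<subseteq> {0..<N}" "{t..<N} \<subseteq> S"
    and k: "t \<le> k" "k < N"
  shows "(\<lambda>j. if j < N then B k j else 0) \<in> row_code N (matmul N P B) S"
  using k
proof (induction "N - k" arbitrary: k rule: less_induct)
  case less
  define F where "F = {k'. k < k' \<and> k' < N \<and> P k k' = 1}"
  have "finite S" using S(1) finite_subset by blast
  then have "(\<lambda>j. if j < N then matmul N P B k j else 0) \<in> row_code N (matmul N P B) S"
    using less.prems S(2) by (intro row_in_row_code) auto
  moreover have "(\<lambda>j. \<Sum>k'\<in>F. if j < N then B k' j else 0) \<in> row_code N (matmul N P B) S"
    using less by (intro row_code_sum) (auto simp: F_def)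
  ultimately have "(\<lambda>j. (if j < N then matmul N P B k j else 0) + (\<Sum>k'\<in>F. if j < N then B k' j else 0))
      \<in> row_code N (matmul N P B) S"
    by (rule row_code_add)
  moreover have "(if j < N then B k j else 0)
      = (if j < N then matmul N P B k j else 0) + (\<Sum>k'\<in>F. if j < N then B k' j else 0)" for j
    using matmul_unit_upper_triangular_row[OF P less.prems(2), of B j]
    by (auto simp: F_def intro: bit_eq_add_swap)
  ultimately show ?case by simp
qed

lemma mono_of_index_eq:
  assumes "i < 2 ^ m"
  shows "mono_of_index m i = {l. l < m \<and> \<not> bit i l}"
proof -
  have bits: "bit i l \<Longrightarrow> l < m" for l
    using assms less_power2_iff_bits by blast
  have "i + xor i (mask m) = or i (xor i (mask m))"
    using bits by (intro disjunctive_add) (auto simp: bit_xor_iff bit_mask_iff)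
  also have "\<dots> = mask m"
    using bits by (intro bit_eqI) (auto simp: bit_or_iff bit_xor_iff bit_mask_iff)
  finally have "2 ^ m - 1 - i = xor i (mask m)"
    by (simp add: mask_eq_exp_minus_1)
  then show ?thesis
    using bits by (auto simp: mono_of_index_def mono_of_bin_def bit_xor_iff bit_mask_iff)
qed

lemma inj_on_mono_of_index: "inj_on (mono_of_index m) {0..<2 ^ m}"
proof (rule inj_onI)
  fix i k assume i: "i \<in> {0..<2 ^ m}" and k: "k \<in> {0..<2 ^ m}"
    and "mono_of_index m i = mono_of_index m k"
  then have "{l. l < m \<and> \<not> bit i l} = {l. l < m \<and> \<not> bit k l}"
    by (simp add: mono_of_index_eq)
  then have low: "l < m \<Longrightarrow> bit i l \<longleftrightarrow> bit k l" for l
    by blast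
  have "\<not> l < m \<Longrightarrow> \<not> bit i l \<and> \<not> bit k l" for l
    using i k by (auto simp: less_power2_iff_bits)
  then show "i = k"
    using low by (intro bit_eqI) blast
qed

lemma mono_le_initial_segment: "finite f \<Longrightarrow> mono_le {0..<card f} f"
  unfolding mono_le_def shift_le_def
  by (auto intro!: exI[of _ f] sorted_wrt_less_idx)

lemma mono_le_subset: "finite f \<Longrightarrow> g \<subseteq> f \<Longrightarrow> mono_le g f"
  unfolding mono_le_def shift_le_def by (auto intro!: exI[of _ g] dest: finite_subset)

lemma decreasing_contains_initial_subsets:
  assumes "decreasing I" "f \<in> I" "finite f" "g \<subseteq> {0..<card f}"
  shows "g \<in> I"
proof -
  have "{0..<card f} \<in> I"
    using assms(1-3) mono_le_initial_segment unfolding decreasing_def by blast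
  then show ?thesis
    using assms(1,4) mono_le_subset[of "{0..<card f}" g] unfolding decreasing_def by blast
qed

lemma bit_tail_index:
  assumes "r \<le> m" "t < 2 ^ r"
  shows "bit ((2::nat) ^ m - 2 ^ r + t) l \<longleftrightarrow> l < r \<and> bit t l \<or> r \<le> l \<and> l < m"
proof -
  have t_bits: "bit t l \<Longrightarrow> l < r" for l
    using assms(2) less_power2_iff_bits by blast
  have "(2::nat) ^ m - 2 ^ r = push_bit r (mask (m - r))"
    using assms(1) by (simp add: push_bit_eq_mult mask_eq_exp_minus_1 diff_mult_distrib
      flip: power_add)
  moreover have "push_bit r (mask (m - r)) + t = or (push_bit r (mask (m - r))) t"
    by (rule disjunctive_add) (auto simp: bit_push_bit_iff_nat dest: t_bits)
  ultimately have "bit ((2::nat) ^ m - 2 ^ r + t) l = bit (or (push_bit r (mask (m - r))) t) l"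
    by (simp only:)
  also have "\<dots> \<longleftrightarrow> l < r \<and> bit t l \<or> r \<le> l \<and> l < m"
    using t_bits assms(1) by (auto simp: bit_or_iff bit_push_bit_iff_nat bit_mask_iff)
  finally show ?thesis .
qed

lemma tail_index_less: "r \<le> m \<Longrightarrow> t < 2 ^ r \<Longrightarrow> (2::nat) ^ m - 2 ^ r + t < 2 ^ m"
  using power_increasing[of r m "2::nat"] by linarith

lemma mono_of_tail_index_subset:
  assumes "r \<le> m" "t < 2 ^ r"
  shows "mono_of_index m (2 ^ m - 2 ^ r + t) \<subseteq> {0..<r}"
  using bit_tail_index[OF assms] tail_index_less[OF assms]
  by (simp add: mono_of_index_eq subset_eq) (meson not_le)

lemma submask_tail_index_iff:
  assumes "r \<le> m" "t < 2 ^ r" "j < 2 ^ m"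
  shows "submask j (2 ^ m - 2 ^ r + t) \<longleftrightarrow> submask (take_bit r j) t"
proof -
  have "bit j l \<Longrightarrow> l < m" for l
    using assms(3) less_power2_iff_bits by blast
  then show ?thesis
    unfolding submask_def bit_tail_index[OF assms(1,2)] bit_take_bit_iff by (meson not_le)
qed

lemma decreasing_contains_tail_indices:
  assumes dec: "decreasing (mono_of_index m ` A)" and A: "A \<subseteq> {0..<2 ^ m}"
    and i: "i \<in> A" "r \<le> card {l. l < m \<and> \<not> bit i l}"
  shows "{2 ^ m - 2 ^ r..<2 ^ m} \<subseteq> A"
proof
  fix k :: nat assume k: "k \<in> {2 ^ m - 2 ^ r..<2 ^ m}"
  have "card {l. l < m \<and> \<not> bit i l} \<le> card {..<m}" by (rule card_mono) auto
  then have "r \<le> m" using i(2) by simp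
  then have "(2::nat) ^ r \<le> 2 ^ m" by simp
  then have "k = 2 ^ m - 2 ^ r + (k - (2 ^ m - 2 ^ r))" "k - (2 ^ m - 2 ^ r) < 2 ^ r"
    using k by auto
  then have "mono_of_index m k \<subseteq> {0..<r}"
    using mono_of_tail_index_subset[OF \<open>r \<le> m\<close>] by metis
  moreover have i_eq: "mono_of_index m i = {l. l < m \<and> \<not> bit i l}"
    using i A by (intro mono_of_index_eq) auto
  ultimately have "mono_of_index m k \<subseteq> {0..<card (mono_of_index m i)}"
    using i(2) by auto
  moreover have "mono_of_index m i \<in> mono_of_index m ` A" "finite (mono_of_index m i)"
    using i(1) i_eq by auto
  ultimately have "mono_of_index m k \<in> mono_of_index m ` A"
    using decreasing_contains_initial_subsets[OF dec] by blast
  then obtain k' where "k' \<in> A" "mono_of_index m k = mono_of_index m k'" by blast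
  moreover have "k = k'"
    by (rule inj_onD[OF inj_on_mono_of_index]) (use calculation k A in auto)
  ultimately show "k \<in> A" by simp
qed

definition low_bits_indicator :: "nat \<Rightarrow> nat \<Rightarrow> nat \<Rightarrow> nat \<Rightarrow> bit" where
  "low_bits_indicator N r t j = of_bool (j < N \<and> take_bit r j = t)"

lemma hweight_low_bits_indicator:
  assumes "r \<le> m" "t < 2 ^ r"
  shows "hweight (2 ^ m) (low_bits_indicator (2 ^ m) r t) = 2 ^ (m - r)"
proof -
  have split: "(2::nat) ^ m = 2 ^ r * 2 ^ (m - r)"
    using assms(1) by (simp flip: power_add)
  have "{j. j < 2 ^ m \<and> take_bit r j = t} = (\<lambda>q. t + 2 ^ r * q) ` {..<2 ^ (m - r)}"
  proof (intro equalityI subsetI)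
    fix j assume "j \<in> {j. j < 2 ^ m \<and> take_bit r j = t}"
    then have "j = t + 2 ^ r * (j div 2 ^ r)" "j div 2 ^ r < 2 ^ (m - r)"
      using split div_mult_mod_eq[of j "2 ^ r"]
      by (auto simp: take_bit_eq_mod less_mult_imp_div_less mult.commute)
    then show "j \<in> (\<lambda>q. t + 2 ^ r * q) ` {..<2 ^ (m - r)}" by blast
  next
    fix j assume "j \<in> (\<lambda>q. t + 2 ^ r * q) ` {..<2 ^ (m - r)}"
    then obtain q where q: "q < 2 ^ (m - r)" "j = t + 2 ^ r * q" by blast
    have "t + 2 ^ r * q < 2 ^ r * (q + 1)" using assms(2) by simp
    also have "\<dots> \<le> 2 ^ m" using q(1) split by (simp del: mult_Suc_right)
    finally show "j \<in> {j. j < 2 ^ m \<and> take_bit r j = t}"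
      using q(2) assms(2) by (simp add: take_bit_eq_mod)
  qed
  moreover have "inj_on (\<lambda>q. t + 2 ^ r * q) {..<2 ^ (m - r)}" by (rule inj_onI) simp
  ultimately show ?thesis
    by (simp add: hweight_def low_bits_indicator_def card_image)
qed

lemma low_bits_indicator_at_index:
  assumes "r \<le> m" "s < 2 ^ r"
  shows "low_bits_indicator (2 ^ m) r t s = of_bool (s = t)"
proof -
  have "(2::nat) ^ r \<le> 2 ^ m" using assms(1) by simp
  then have "s < 2 ^ m" using assms(2) by linarith
  then show ?thesis using assms(2) by (simp add: low_bits_indicator_def take_bit_nat_eq_self)
qed

lemma inj_on_low_bits_indicator:
  assumes "r \<le> m"
  shows "inj_on (low_bits_indicator (2 ^ m) r) {..<2 ^ r}"
proof (rule inj_onI)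
  fix s t assume "s \<in> {..<2 ^ r}" "t \<in> {..<2 ^ r}"
    and "low_bits_indicator (2 ^ m) r s = low_bits_indicator (2 ^ m) r t"
  then have "low_bits_indicator (2 ^ m) r s t = low_bits_indicator (2 ^ m) r t t" by simp
  then show "s = t" using assms \<open>t \<in> {..<2 ^ r}\<close> by (simp add: low_bits_indicator_at_index)
qed

lemma low_bits_indicator_nonzero:
  assumes "r \<le> m" "t < 2 ^ r"
  shows "low_bits_indicator (2 ^ m) r t \<noteq> (\<lambda>_. 0)"
proof
  assume "low_bits_indicator (2 ^ m) r t = (\<lambda>_. 0)"
  then have "low_bits_indicator (2 ^ m) r t t = 0" by simp
  then show False using assms by (simp add: low_bits_indicator_at_index)
qed

lemma low_bits_indicator_in_row_code:
  assumes "r \<le> m"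
    and rows: "\<And>s. s < 2 ^ r \<Longrightarrow>
      (\<lambda>j. if j < 2 ^ m then polarG m (2 ^ m - 2 ^ r + s) j else 0) \<in> row_code (2 ^ m) B S"
    and "t < 2 ^ r"
  shows "low_bits_indicator (2 ^ m) r t \<in> row_code (2 ^ m) B S"
  using assms(3)
proof (induction t rule: less_induct)
  case (less t)
  define T where "T = {s. submask s t}"
  have "T \<subseteq> {..t}" using submask_imp_le by (auto simp: T_def)
  then have T: "finite T" "t \<in> T" "\<And>s. s \<in> T - {t} \<Longrightarrow> s < t"
    by (auto simp: T_def dest: finite_subset)
  have "(if j < 2 ^ m then polarG m (2 ^ m - 2 ^ r + t) j else 0) = (\<Sum>s\<in>T. low_bits_indicator (2 ^ m) r s j)"
    for j
  proof (cases "j < 2 ^ m")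
    case True
    then have "polarG m (2 ^ m - 2 ^ r + t) j = of_bool (submask j (2 ^ m - 2 ^ r + t))"
      using tail_index_less[OF assms(1) less.prems] by (simp add: polarG_eq_submask)
    also have "\<dots> = of_bool (submask (take_bit r j) t)"
      using submask_tail_index_iff[OF assms(1) less.prems True] by (simp only:)
    finally show ?thesis
      using True T(1) by (simp add: low_bits_indicator_def T_def)
  qed (simp add: low_bits_indicator_def)
  then have "(if j < 2 ^ m then polarG m (2 ^ m - 2 ^ r + t) j else 0)
      = low_bits_indicator (2 ^ m) r t j + (\<Sum>s\<in>T - {t}. low_bits_indicator (2 ^ m) r s j)" for j
    using sum.remove[OF T(1,2)] by simp
  then have "low_bits_indicator (2 ^ m) r t j
      = (if j < 2 ^ m then polarG m (2 ^ m - 2 ^ r + t) j else 0)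
        + (\<Sum>s\<in>T - {t}. low_bits_indicator (2 ^ m) r s j)" for j
    by (rule bit_eq_add_swap)
  moreover have "(\<lambda>j. \<Sum>s\<in>T - {t}. low_bits_indicator (2 ^ m) r s j) \<in> row_code (2 ^ m) B S"
    using T less by (intro row_code_sum) auto
  ultimately show ?case
    using row_code_add[OF rows[OF less.prems]] by presburger
qed

lemma hweight_polarG_row:
  assumes "i < 2 ^ m"
  shows "hweight (2 ^ m) (\<lambda>j. if j < 2 ^ m then polarG m i j else 0) = 2 ^ card {l. l < m \<and> bit i l}"
proof -
  have "hweight (2 ^ m) (\<lambda>j. if j < 2 ^ m then polarG m i j else 0) = card {j. j < 2 ^ m \<and> submask j i}"
    unfolding hweight_def using assms by (intro arg_cong[where f = card]) (auto simp: polarG_eq_submask)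
  then show ?thesis using card_submasks[OF assms] by simp
qed

lemma polar_code_weight_ge:
  assumes "unit_upper_triangular (2 ^ m) P" "A \<subseteq> {0..<2 ^ m}"
    and "c \<in> row_code (2 ^ m) (matmul (2 ^ m) P (polarG m)) A" "c \<noteq> (\<lambda>_. 0)"
  shows "\<exists>i\<in>A. 2 ^ card {l. l < m \<and> bit i l} \<le> hweight (2 ^ m) c"
proof -
  obtain i b where "i \<in> A" "b i = 1" "\<forall>k<i. b k = 0"
    and c: "c = (\<lambda>j. if j < 2 ^ m then \<Sum>k<2 ^ m. b k * polarG m k j else 0)"
    using row_code_matmul_leading_row[OF assms] .
  moreover have "i < 2 ^ m" using \<open>i \<in> A\<close> assms(2) by auto
  ultimately show ?thesis
    using card_submasks_le_hweight[of i m b] card_submasks[of i m] by auto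
qed

lemma min_distance_polar_code:
  assumes "A \<subseteq> {0..<2 ^ m}" "A \<noteq> {}"
  shows "min_distance (2 ^ m) (row_code (2 ^ m) (polarG m) A)
    = Min ((\<lambda>i. 2 ^ card {l. l < m \<and> bit i l}) ` A)"
    (is "_ = Min (?w ` A)")
proof -
  have "finite A" using assms(1) finite_subset by blast
  then have "Min (?w ` A) \<in> ?w ` A" using assms(2) by (intro Min_in) auto
  then obtain i where i: "i \<in> A" "?w i = Min (?w ` A)" by auto
  have "i < 2 ^ m" using i(1) assms(1) by auto
  show ?thesis
  proof (rule min_distance_eqI)
    fix c assume "c \<in> row_code (2 ^ m) (polarG m) A" "c \<noteq> (\<lambda>_. 0)"
    then obtain k where "k \<in> A" "?w k \<le> hweight (2 ^ m) c"
      using polar_code_weight_ge[OF unit_upper_triangular_id assms(1)]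
      by (auto simp: row_code_matmul_id[OF assms(1)])
    moreover have "Min (?w ` A) \<le> ?w k"
      using \<open>finite A\<close> \<open>k \<in> A\<close> by simp
    ultimately show "Min (?w ` A) \<le> hweight (2 ^ m) c" by linarith
  next
    show "(\<lambda>j. if j < 2 ^ m then polarG m i j else 0) \<in> row_code (2 ^ m) (polarG m) A"
      using \<open>finite A\<close> i(1) by (rule row_in_row_code)
    show "(\<lambda>j. if j < 2 ^ m then polarG m i j else 0) \<noteq> (\<lambda>_. 0)"
      using \<open>i < 2 ^ m\<close> by (auto simp: fun_eq_iff polarG_eq_submask intro!: exI[of _ i])
    show "hweight (2 ^ m) (\<lambda>j. if j < 2 ^ m then polarG m i j else 0) = Min (?w ` A)"
      using hweight_polarG_row[OF \<open>i < 2 ^ m\<close>] i(2) by simp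
  qed
qed

lemma polar_code_min_distance_le_hweight:
  assumes "unit_upper_triangular (2 ^ m) P" "A \<subseteq> {0..<2 ^ m}" "A \<noteq> {}"
    and "c \<in> row_code (2 ^ m) (matmul (2 ^ m) P (polarG m)) A" "c \<noteq> (\<lambda>_. 0)"
  shows "min_distance (2 ^ m) (row_code (2 ^ m) (polarG m) A) \<le> hweight (2 ^ m) c"
proof -
  obtain k where "k \<in> A" "2 ^ card {l. l < m \<and> bit k l} \<le> hweight (2 ^ m) c"
    using polar_code_weight_ge[OF assms(1,2,4,5)] by blast
  moreover have "finite A" using assms(2) finite_subset by blast
  ultimately show ?thesis
    unfolding min_distance_polar_code[OF assms(2,3)] by (meson Min_le finite_imageI imageI le_trans)
qed

lemma polar_code_min_distance_row:
  assumes "A \<subseteq> {0..<2 ^ m}" "A \<noteq> {}"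
  obtains i where "i \<in> A"
    "2 ^ card {l. l < m \<and> bit i l} = min_distance (2 ^ m) (row_code (2 ^ m) (polarG m) A)"
proof -
  have "finite A" using assms(1) finite_subset by blast
  then have "Min ((\<lambda>i. (2::nat) ^ card {l. l < m \<and> bit i l}) ` A) \<in> (\<lambda>i. 2 ^ card {l. l < m \<and> bit i l}) ` A"
    using assms(2) by (intro Min_in) auto
  then obtain i where "Min ((\<lambda>i. (2::nat) ^ card {l. l < m \<and> bit i l}) ` A) = 2 ^ card {l. l < m \<and> bit i l}"
    "i \<in> A"
    by (rule imageE)
  then show ?thesis
    using that min_distance_polar_code[OF assms] by simp
qed

lemma low_bits_indicator_in_matmul_polar_code:
  assumes P: "unit_upper_triangular (2 ^ m) P" and A: "A \<subseteq> {0..<2 ^ m}"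
    and tail: "{2 ^ m - 2 ^ r..<2 ^ m} \<subseteq> A" and "r \<le> m" "t < 2 ^ r"
  shows "low_bits_indicator (2 ^ m) r t \<in> row_code (2 ^ m) (matmul (2 ^ m) P (polarG m)) A"
  using assms(4) _ assms(5)
proof (rule low_bits_indicator_in_row_code)
  fix s :: nat assume "s < 2 ^ r"
  then show "(\<lambda>j. if j < 2 ^ m then polarG m (2 ^ m - 2 ^ r + s) j else 0)
      \<in> row_code (2 ^ m) (matmul (2 ^ m) P (polarG m)) A"
    using tail_index_less[OF \<open>r \<le> m\<close>]
    by (intro row_code_matmul_contains_tail_rows[OF P A tail]) auto
qed

lemma card_codewords_of_weight_ge:
  assumes "r \<le> m" "finite C" "\<And>t. t < 2 ^ r \<Longrightarrow> low_bits_indicator (2 ^ m) r t \<in> C"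
  shows "2 ^ r \<le> card {c \<in> C. hweight (2 ^ m) c = 2 ^ (m - r)}"
proof -
  have "low_bits_indicator (2 ^ m) r ` {..<2 ^ r} \<subseteq> {c \<in> C. hweight (2 ^ m) c = 2 ^ (m - r)}"
    using assms(3) hweight_low_bits_indicator[OF assms(1)] by auto
  then have "card (low_bits_indicator (2 ^ m) r ` {..<2 ^ r}) \<le> card {c \<in> C. hweight (2 ^ m) c = 2 ^ (m - r)}"
    using assms(2) by (intro card_mono) auto
  then show ?thesis
    by (simp add: card_image[OF inj_on_low_bits_indicator[OF assms(1)]])
qed

theorem proposition5:
  fixes m r :: nat and A :: "nat set" and P :: "nat \<Rightarrow> nat \<Rightarrow> bit"
  assumes "m \<ge> 1"
    and "A \<subseteq> {0..<2 ^ m}" and "A \<noteq> {}"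
    and "decreasing (mono_of_index m ` A)"
    and "r \<le> m"
    and "min_distance (2 ^ m) (row_code (2 ^ m) (polarG m) A) = 2 ^ (m - r)"
    and "\<forall>i < 2 ^ m. P i i = 1"
    and "\<forall>i < 2 ^ m. \<forall>j < i. P i j = 0"
  shows "min_distance (2 ^ m) (row_code (2 ^ m) (matmul (2 ^ m) P (polarG m)) A) = 2 ^ (m - r)
    \<and> card {c \<in> row_code (2 ^ m) (matmul (2 ^ m) P (polarG m)) A. hweight (2 ^ m) c = 2 ^ (m - r)} \<ge> 2 ^ r"
proof -
  define V where "V = row_code (2 ^ m) (matmul (2 ^ m) P (polarG m)) A"
  have P: "unit_upper_triangular (2 ^ m) P"
    using assms(7,8) by (simp add: unit_upper_triangular_def)
  obtain i where "i \<in> A" "2 ^ card {l. l < m \<and> bit i l} = (2::nat) ^ (m - r)"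
    using polar_code_min_distance_row[OF assms(2,3)] assms(6) by metis
  then have "r \<le> card {l. l < m \<and> \<not> bit i l}"
    using assms(5) by (simp add: card_zero_bits)
  then have tail: "{2 ^ m - 2 ^ r..<2 ^ m} \<subseteq> A"
    by (rule decreasing_contains_tail_indices[OF assms(4,2) \<open>i \<in> A\<close>])
  have indicators: "low_bits_indicator (2 ^ m) r t \<in> V" if "t < 2 ^ r" for t
    unfolding V_def using P assms(2) tail assms(5) that by (rule low_bits_indicator_in_matmul_polar_code)
  have "min_distance (2 ^ m) V = 2 ^ (m - r)"
  proof (rule min_distance_eqI)
    show "2 ^ (m - r) \<le> hweight (2 ^ m) c" if "c \<in> V" "c \<noteq> (\<lambda>_. 0)" for c
      using polar_code_min_distance_le_hweight[OF P assms(2,3)] that assms(6) by (simp add: V_def)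
  qed (use indicators[of 0] low_bits_indicator_nonzero hweight_low_bits_indicator assms(5) in auto)
  moreover have "2 ^ r \<le> card {c \<in> V. hweight (2 ^ m) c = 2 ^ (m - r)}"
    using assms(5) finite_row_code indicators unfolding V_def by (rule card_codewords_of_weight_ge)
  ultimately show ?thesis unfolding V_def by blast
qed

end
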